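(* Let $r\ge 2$ be an integer, $\tau_0>0$, $k_a\in(0,\tfrac12)$, and $$h_w> \frac{4\tau_0}{(1+r)(1+2k_a)}.$$ Then there exist $k_v>0$, $k_p>0$ such that for every $\tau\in[0,\tau_0]$, the polynomial $\tau s^3+s^2+(2k_v+(1+r)k_ph_w)s+2k_p$ is Hurwitz and $$2\sup_{\omega\in\mathbb{R}}|H_0(j\omega;\tau)|\le 1,\qquad H_0(s;\tau)=\frac{k_as^2+k_vs+k_p}{\tau s^3+s^2+(2k_v+(1+r)k_ph_w)s+2k_p}.$$ Consequently, for every $\tau\in[0,\tau_0]$ and $\omega\in\mathbb{R}$, all roots of $z^r-H_0(j\omega;\tau)z^{r-1}-H_0(j\omega;\tau)$ satisfy $|z|\le1$ (robust string stability).
   Context: Platoon of identical vehicles with dynamics $\ddot x_i=a_i$, $\tau\dot a_i+a_i=u_i$, parasitic lag $\tau\in[0,\tau_0]$, each vehicle using information from its immediate predecessor and its $r$-th predecessor via $u_i=\sum_{l\in\{1,r\}}\big[k_a a_{i-l}-k_v(v_i-v_{i-l})-k_p(x_i-x_{i-l}+d_l+l h_w v_i)\big]$ (equal gains for $l=1$ and $l=r$). With spacing errors $e_i=x_i-x_{i-1}+d+h_wv_i$, errors propagate as $E_i(s)=H_0(s)E_{i-1}(s)+H_0(s)E_{i-r}(s)$. *)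

theory Defs
  imports Complex_Main "HOL-Computational_Algebra.Polynomial"
begin

definition hurwitz :: "complex poly \<Rightarrow> bool" where
  "hurwitz p \<longleftrightarrow> p \<noteq> 0 \<and> (\<forall>z. poly p z = 0 \<longrightarrow> Re z < 0)"

definition char_poly :: "nat \<Rightarrow> real \<Rightarrow> real \<Rightarrow> real \<Rightarrow> real \<Rightarrow> complex poly" where
  "char_poly r hw kv kp tau =
     [: complex_of_real (2 * kp), complex_of_real (2 * kv + (1 + real r) * kp * hw), 1,
        complex_of_real tau :]"

definition H0 :: "nat \<Rightarrow> real \<Rightarrow> real \<Rightarrow> real \<Rightarrow> real \<Rightarrow> real \<Rightarrow> complex \<Rightarrow> complex" where
  "H0 r hw ka kv kp tau s =
     (complex_of_real ka * s^2 + complex_of_real kv * s + complex_of_real kp)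
     / poly (char_poly r hw kv kp tau) s"

end

theory Submission
  imports Defs
begin

text \<open>
  With P = (1 + r) hw the coefficient of s in the characteristic polynomial is
  c = 2 kv + P kp.  By the Routh--Hurwitz criterion the cubic is Hurwitz as soon as
  c > 2 kp tau, and on the imaginary axis
  |D(i w)|^2 - 4 |N(i w)|^2 = w^2 (c^2 - 4 kv^2 - 4 kp (1 - 2 ka)) + w^4 (1 - 4 ka^2 - 2 c tau) + tau^2 w^6,
  so the gain bound 2 |H0| \<le> 1 follows from two sign conditions.  All three
  conditions are monotone in tau, so it suffices to meet them at tau0, which the gains
  c = (1 - 4 ka^2) / (2 tau0), kv = (1 - 2 ka) / P do; the hypothesis on hw is exactly
  kp > 0.  Finally, if 2 |H| \<le> 1 then a root z of z^r - H z^(r-1) - H with |z| > 1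
  would satisfy |z|^r \<le> (|z|^(r-1) + 1) / 2 < |z|^r.
\<close>

lemma Re_Im_poly_real_cubic:
  fixes a0 a1 a2 a3 :: real and z :: complex
  defines "p \<equiv> [:complex_of_real a0, complex_of_real a1, complex_of_real a2, complex_of_real a3:]"
  shows "Re (poly p z) =
           a0 + a1 * Re z + a2 * (Re z ^ 2 - Im z ^ 2) + a3 * (Re z ^ 3 - 3 * Re z * Im z ^ 2)"
    and "Im (poly p z) =
           a1 * Im z + 2 * a2 * Re z * Im z + a3 * (3 * Re z ^ 2 * Im z - Im z ^ 3)"
  unfolding p_def by (simp_all add: algebra_simps power2_eq_square power3_eq_cube)

lemma hurwitz_real_cubic:
  fixes a0 a1 a2 a3 :: real
  assumes "0 < a0" "0 < a1" "0 < a2" "0 \<le> a3" "a0 * a3 < a1 * a2"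
  shows "hurwitz [:complex_of_real a0, complex_of_real a1, complex_of_real a2, complex_of_real a3:]"
    (is "hurwitz ?p")
  unfolding hurwitz_def
proof (intro conjI allI impI)
  show "?p \<noteq> 0" using assms(1) by simp
next
  fix z assume root: "poly ?p z = 0"
  define x y where "x = Re z" and "y = Im z"
  have re: "a0 + a1 * x + a2 * (x ^ 2 - y ^ 2) + a3 * (x ^ 3 - 3 * x * y ^ 2) = 0"
    using arg_cong[OF root, of Re] unfolding Re_Im_poly_real_cubic x_def y_def by simp
  have im: "y * (a1 + 2 * a2 * x + a3 * (3 * x ^ 2 - y ^ 2)) = 0"
    using arg_cong[OF root, of Im] unfolding Re_Im_poly_real_cubic x_def y_def
    by (simp add: algebra_simps power2_eq_square power3_eq_cube)
  show "Re z < 0"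
  proof (rule ccontr)
    assume "\<not> Re z < 0"
    then have "0 \<le> x" by (simp add: x_def)
    then have nonneg: "0 \<le> a1 * x" "0 \<le> a2 * x ^ 2" "0 \<le> a3 * x ^ 3"
      "0 \<le> x * (a1 * a3 + a2 ^ 2)" "0 \<le> a2 * a3 * x ^ 2" "0 \<le> a3 ^ 2 * x ^ 3"
      using assms by simp_all
    consider "y = 0" | "a1 + 2 * a2 * x + a3 * (3 * x ^ 2 - y ^ 2) = 0"
      using im by auto
    then show False
    proof cases
      case 1
      with re nonneg assms(1) show False by simp
    next
      case 2
      then have y2: "a3 * y ^ 2 = 3 * a3 * x ^ 2 + 2 * a2 * x + a1"
        by (simp add: algebra_simps)
      \<comment> \<open>eliminate y from a3 times the real part using the imaginary part\<close>
      have "0 = a3 * (a0 + a1 * x + a2 * (x ^ 2 - y ^ 2) + a3 * (x ^ 3 - 3 * x * y ^ 2))"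
        using re by simp
      also have "\<dots> = a0 * a3 + a1 * a3 * x + a2 * a3 * x ^ 2 + a3 ^ 2 * x ^ 3
                      - (a2 + 3 * a3 * x) * (a3 * y ^ 2)"
        by (simp add: algebra_simps power2_eq_square power3_eq_cube)
      also have "\<dots> = a0 * a3 - a1 * a2 - 2 * x * (a1 * a3 + a2 ^ 2)
                      - 8 * a2 * a3 * x ^ 2 - 8 * a3 ^ 2 * x ^ 3"
        unfolding y2 by (simp add: algebra_simps power2_eq_square power3_eq_cube)
      finally show False using nonneg assms(5) by linarith
    qed
  qed
qed

lemma hurwitz_char_poly:
  assumes "0 < kp" "0 \<le> tau" "2 * kp * tau < 2 * kv + (1 + real r) * kp * hw"
  shows "hurwitz (char_poly r hw kv kp tau)"
proof -
  have "0 \<le> 2 * kp * tau" using assms(1,2) by simp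
  with assms(3) have "0 < 2 * kv + (1 + real r) * kp * hw" by linarith
  then show ?thesis
    unfolding char_poly_def of_real_1[where 'a = complex, symmetric]
    using assms by (intro hurwitz_real_cubic) simp_all
qed

lemma root_norm_le_1_if_gain_le_half:
  fixes H z :: "'a :: real_normed_field"
  assumes "0 < r" "2 * norm H \<le> 1" "z ^ r - H * z ^ (r - 1) - H = 0"
  shows "norm z \<le> 1"
proof (rule ccontr)
  assume "\<not> norm z \<le> 1"
  then have z1: "1 < norm z" by simp
  define X where "X = norm z ^ (r - 1)"
  have X1: "1 \<le> X" unfolding X_def using z1 by (simp add: one_le_power)
  have "norm z * X = norm (z ^ r)"
    using assms(1) by (cases r) (simp_all add: X_def norm_mult norm_power)
  also have "\<dots> = norm H * norm (z ^ (r - 1) + 1)"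
    using assms(3) by (simp add: algebra_simps norm_mult flip: norm_mult)
  also have "\<dots> \<le> norm H * (X + 1)"
    by (intro mult_left_mono) (auto intro: order.trans[OF norm_triangle_ineq] simp: X_def norm_power)
  also have "\<dots> \<le> (1 / 2) * (X + 1)"
    using assms(2) X1 by (intro mult_right_mono) simp_all
  finally have "norm z * X \<le> (1 / 2) * (X + 1)" .
  moreover have "X < norm z * X" using z1 X1 by simp
  ultimately show False using X1 by simp
qed

lemma half_norm_divide_le:
  fixes a b :: "'a :: real_normed_field"
  assumes "2 * norm a \<le> norm b"
  shows "2 * norm (a / b) \<le> 1"
  using assms by (cases "b = 0") (simp_all add: norm_divide field_simps)

lemma H0_gain_le_half:
  fixes r :: nat and hw ka kv kp tau w :: real
  defines "c \<equiv> 2 * kv + (1 + real r) * kp * hw"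
  assumes low: "4 * kv ^ 2 + 4 * kp * (1 - 2 * ka) \<le> c ^ 2"
    and high: "2 * c * tau \<le> 1 - 4 * ka ^ 2"
  shows "2 * cmod (H0 r hw ka kv kp tau (\<i> * complex_of_real w)) \<le> 1"
proof -
  define N where "N = complex_of_real ka * (\<i> * complex_of_real w) ^ 2
      + complex_of_real kv * (\<i> * complex_of_real w) + complex_of_real kp"
  define D where "D = poly (char_poly r hw kv kp tau) (\<i> * complex_of_real w)"
  have N: "Re N = kp - ka * w ^ 2" "Im N = kv * w"
    unfolding N_def by (simp_all add: power2_eq_square)
  have D: "Re D = 2 * kp - w ^ 2" "Im D = c * w - tau * w ^ 3"
    unfolding D_def char_poly_def c_def
    by (simp_all add: algebra_simps power2_eq_square power3_eq_cube)
  have "(cmod D) ^ 2 - (2 * cmod N) ^ 2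
      = (2 * kp - w ^ 2) ^ 2 + (c * w - tau * w ^ 3) ^ 2 - 4 * ((kp - ka * w ^ 2) ^ 2 + (kv * w) ^ 2)"
    unfolding power_mult_distrib cmod_power2 N D by simp
  also have "\<dots> = w ^ 2 * (c ^ 2 - 4 * kv ^ 2 - 4 * kp * (1 - 2 * ka))
        + w ^ 4 * (1 - 4 * ka ^ 2 - 2 * c * tau) + tau ^ 2 * w ^ 6"
    by (simp add: eval_nat_numeral algebra_simps)
  also have "\<dots> \<ge> 0"
    using low high by (intro add_nonneg_nonneg mult_nonneg_nonneg) (simp_all add: zero_le_even_power)
  finally have "(2 * cmod N) ^ 2 \<le> (cmod D) ^ 2"
    by simp
  then have "2 * cmod N \<le> cmod D"
    by (rule power2_le_imp_le) simp
  then show ?thesis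
    unfolding H0_def N_def D_def by (rule half_norm_divide_le)
qed

lemma exists_gains_at_max_lag:
  fixes P tau0 ka :: real
  assumes "0 < tau0" "0 < ka" "ka < 1 / 2" "4 * tau0 < P * (1 + 2 * ka)"
  shows "\<exists>kv kp. 0 < kv \<and> 0 < kp \<and> 2 * kp * tau0 < 2 * kv + P * kp
           \<and> 2 * (2 * kv + P * kp) * tau0 \<le> 1 - 4 * ka ^ 2
           \<and> 4 * kv ^ 2 + 4 * kp * (1 - 2 * ka) \<le> (2 * kv + P * kp) ^ 2"
proof -
  have "0 < P"
    using assms by (smt (verit) zero_less_mult_iff)
  then have "P * (1 + 2 * ka) < P * 2"
    using assms(3) by simp
  then have P: "2 * tau0 < P"
    using assms(4) by simp
  \<comment> \<open>take c as large as the high-frequency condition allows; this kv turns the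
      low-frequency condition into (c - 2 kv)^2 \<ge> 0\<close>
  define c where "c = (1 - 4 * ka ^ 2) / (2 * tau0)"
  define kv where "kv = (1 - 2 * ka) / P"
  define kp where "kp = (c - 2 * kv) / P"
  have kv: "0 < kv" unfolding kv_def using assms P by simp
  have "2 * kv < c"
  proof -
    have "(1 - 2 * ka) * (4 * tau0) < (1 - 2 * ka) * (P * (1 + 2 * ka))"
      using assms by (intro mult_strict_left_mono) simp_all
    then show ?thesis
      unfolding c_def kv_def using assms P by (simp add: field_simps power2_eq_square)
  qed
  then have kp: "0 < kp" unfolding kp_def using P assms by simp
  have c: "2 * kv + P * kp = c" unfolding kp_def using P assms by simp
  have "2 * kp * tau0 < P * kp" using kp P by simp
  also have "\<dots> < c" using c kv by simp
  finally have hurwitz_margin: "2 * kp * tau0 < c" .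
  have "c ^ 2 - 4 * kv ^ 2 - 4 * kp * (1 - 2 * ka) = (c - 2 * kv) ^ 2"
    unfolding kp_def kv_def using P assms by (simp add: field_simps power2_eq_square)
  then have "4 * kv ^ 2 + 4 * kp * (1 - 2 * ka) \<le> c ^ 2"
    by (smt (verit) zero_le_power2)
  moreover have "2 * c * tau0 = 1 - 4 * ka ^ 2" unfolding c_def using assms by simp
  ultimately show ?thesis
    using kv kp hurwitz_margin by (intro exI[of _ kv] exI[of _ kp]) (simp only: c, simp)
qed

lemma hurwitz_and_gain_le_half_below_max_lag:
  fixes r :: nat and hw ka kv kp tau0 tau w :: real
  defines "c \<equiv> 2 * kv + (1 + real r) * kp * hw"
  assumes "0 < kp" "tau \<in> {0..tau0}"
    and margin: "2 * kp * tau0 < c"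
    and high: "2 * c * tau0 \<le> 1 - 4 * ka ^ 2"
    and low: "4 * kv ^ 2 + 4 * kp * (1 - 2 * ka) \<le> c ^ 2"
  shows "hurwitz (char_poly r hw kv kp tau)"
    and "2 * cmod (H0 r hw ka kv kp tau (\<i> * complex_of_real w)) \<le> 1"
proof -
  from assms(3) have tau: "0 \<le> tau" "tau \<le> tau0" by simp_all
  have "2 * kp * tau \<le> 2 * kp * tau0"
    using tau(2) assms(2) by (intro mult_left_mono) simp_all
  with margin have "2 * kp * tau < c" by linarith
  with assms(2) tau(1) show "hurwitz (char_poly r hw kv kp tau)"
    unfolding c_def by (rule hurwitz_char_poly)
  have "0 \<le> 2 * kp * tau0" using assms(2) tau by simp
  then have "2 * c * tau \<le> 2 * c * tau0"
    using tau(2) margin by (intro mult_left_mono) simp_all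
  with high low show "2 * cmod (H0 r hw ka kv kp tau (\<i> * complex_of_real w)) \<le> 1"
    unfolding c_def by (intro H0_gain_le_half) simp_all
qed

theorem corollary1:
  fixes r :: nat and tau0 ka hw :: real
  assumes "r \<ge> 2" and "tau0 > 0" and "0 < ka" and "ka < 1/2"
    and "hw > 4 * tau0 / ((1 + real r) * (1 + 2 * ka))"
  shows "\<exists>kv kp. kv > 0 \<and> kp > 0 \<and>
    (\<forall>tau \<in> {0..tau0}.
        hurwitz (char_poly r hw kv kp tau)
      \<and> (\<forall>\<omega>::real. 2 * cmod (H0 r hw ka kv kp tau (\<i> * complex_of_real \<omega>)) \<le> 1)
      \<and> (\<forall>\<omega>::real. \<forall>z::complex.
           z ^ r - H0 r hw ka kv kp tau (\<i> * complex_of_real \<omega>) * z ^ (r - 1)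
             - H0 r hw ka kv kp tau (\<i> * complex_of_real \<omega>) = 0 \<longrightarrow> cmod z \<le> 1))"
proof -
  have "0 < (1 + real r) * (1 + 2 * ka)"
    using assms(3) by simp
  then have "4 * tau0 < (1 + real r) * hw * (1 + 2 * ka)"
    using assms(5) by (simp add: pos_divide_less_eq algebra_simps)
  then obtain kv kp where kv: "0 < kv" and kp: "0 < kp"
    and gains: "2 * kp * tau0 < 2 * kv + (1 + real r) * kp * hw"
      "2 * (2 * kv + (1 + real r) * kp * hw) * tau0 \<le> 1 - 4 * ka ^ 2"
      "4 * kv ^ 2 + 4 * kp * (1 - 2 * ka) \<le> (2 * kv + (1 + real r) * kp * hw) ^ 2"
    using exists_gains_at_max_lag[of tau0 ka "(1 + real r) * hw"] assms(2-4)
    by (auto simp: mult.commute mult.left_commute)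
  note robust = hurwitz_and_gain_le_half_below_max_lag[OF kp _ gains]
  have roots: "cmod z \<le> 1"
    if "tau \<in> {0..tau0}"
      and "z ^ r - H0 r hw ka kv kp tau (\<i> * complex_of_real w) * z ^ (r - 1)
             - H0 r hw ka kv kp tau (\<i> * complex_of_real w) = 0"
    for tau w z
    using root_norm_le_1_if_gain_le_half[OF _ robust(2)[OF that(1)] that(2)] assms(1) by simp
  show ?thesis
    using kv kp robust(1) robust(2) roots by blast
qed

end
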